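(* Let $R$ be a commutative ring. The following are equivalent: (1) $R$ is a coherent ring; (2) $R$ is a $u$-$(R\setminus\mathfrak p)$-coherent ring for every prime ideal $\mathfrak p$ of $R$; (3) $R$ is a $u$-$(R\setminus\mathfrak m)$-coherent ring for every maximal ideal $\mathfrak m$ of $R$.
   Context: For a multiplicative subset $S$ of $R$ (containing $1$, closed under products): $M$ is $S$-finite with respect to $s\in S$ if there is a finitely generated submodule $F\subseteq M$ with $sM\subseteq F$; $M$ is $u$-$S$-finitely presented with respect to $s$ if there is an exact sequence $0\to T_1\to F\to M\to T_2\to 0$ with $F$ finitely presented and $sT_1=sT_2=0$. $R$ is a $u$-$S$-coherent ring if there is $s\in S$ such that $R$ is $S$-finite with respect to $s$ and every finitely generated ideal of $R$ is $u$-$S$-finitely presented with respect to $s$. *)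

theory Defs
  imports Main
begin

text \<open>Ideals of a commutative ring with identity, given by a type of class comm_ring_1
  (the whole ring is UNIV).\<close>

definition is_ideal :: "'a::comm_ring_1 set \<Rightarrow> bool" where
  "is_ideal I \<longleftrightarrow> 0 \<in> I \<and> (\<forall>x\<in>I. \<forall>y\<in>I. x + y \<in> I) \<and> (\<forall>r. \<forall>x\<in>I. r * x \<in> I)"

definition prime_ideal :: "'a::comm_ring_1 set \<Rightarrow> bool" where
  "prime_ideal P \<longleftrightarrow> is_ideal P \<and> P \<noteq> UNIV \<and> (\<forall>a b. a * b \<in> P \<longrightarrow> a \<in> P \<or> b \<in> P)"

definition maximal_ideal :: "'a::comm_ring_1 set \<Rightarrow> bool" where
  "maximal_ideal M \<longleftrightarrow> is_ideal M \<and> M \<noteq> UNIV \<and>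
     (\<forall>J. is_ideal J \<and> M \<subseteq> J \<longrightarrow> J = M \<or> J = UNIV)"

definition multiplicative_subset :: "'a::comm_ring_1 set \<Rightarrow> bool" where
  "multiplicative_subset S \<longleftrightarrow> 1 \<in> S \<and> (\<forall>a\<in>S. \<forall>b\<in>S. a * b \<in> S)"

definition gen_ideal :: "'a::comm_ring_1 set \<Rightarrow> 'a set" where
  "gen_ideal G = {(\<Sum>g\<in>G. c g * g) | c. True}"

definition fg_ideal :: "'a::comm_ring_1 set \<Rightarrow> bool" where
  "fg_ideal I \<longleftrightarrow> (\<exists>G. finite G \<and> I = gen_ideal G)"

text \<open>The free module R^n, realised as functions nat => R vanishing from index n on.\<close>
definition free_mod :: "nat \<Rightarrow> (nat \<Rightarrow> 'a::comm_ring_1) set" where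
  "free_mod n = {v. \<forall>i\<ge>n. v i = 0}"

definition gen_submod :: "(nat \<Rightarrow> 'a::comm_ring_1) set \<Rightarrow> (nat \<Rightarrow> 'a) set" where
  "gen_submod G = {(\<lambda>i. \<Sum>g\<in>G. c g * g i) | c. True}"

definition fg_submod :: "nat \<Rightarrow> (nat \<Rightarrow> 'a::comm_ring_1) set \<Rightarrow> bool" where
  "fg_submod n K \<longleftrightarrow> (\<exists>G. finite G \<and> G \<subseteq> free_mod n \<and> K = gen_submod G)"

definition lin_map :: "nat \<Rightarrow> (nat \<Rightarrow> 'a::comm_ring_1) \<Rightarrow> (nat \<Rightarrow> 'a) \<Rightarrow> 'a" where
  "lin_map n m v = (\<Sum>i<n. v i * m i)"

definition lin_kernel :: "nat \<Rightarrow> (nat \<Rightarrow> 'a::comm_ring_1) \<Rightarrow> (nat \<Rightarrow> 'a) set" where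
  "lin_kernel n m = {v \<in> free_mod n. lin_map n m v = 0}"

text \<open>An ideal I is finitely presented: there is an exact sequence 0 -> K -> R^n -> I -> 0
  with K finitely generated.\<close>
definition fp_ideal :: "'a::comm_ring_1 set \<Rightarrow> bool" where
  "fp_ideal I \<longleftrightarrow> (\<exists>n m. (\<forall>i<n. m i \<in> I) \<and> lin_map n m ` free_mod n = I \<and>
      fg_submod n (lin_kernel n m))"

definition coherent_ring :: "'a::comm_ring_1 itself \<Rightarrow> bool" where
  "coherent_ring _ \<longleftrightarrow> (\<forall>I::'a set. fg_ideal I \<longrightarrow> fp_ideal I)"

definition S_finite_wrt :: "'a::comm_ring_1 \<Rightarrow> 'a set \<Rightarrow> bool" where
  "S_finite_wrt s M \<longleftrightarrow> (\<exists>F. finite F \<and> F \<subseteq> M \<and> (\<lambda>x. s * x) ` M \<subseteq> gen_ideal F)"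

text \<open>u-S-finitely presented with respect to s: an exact sequence
  0 -> T1 -> F -> I -> T2 -> 0 with F finitely presented and s T1 = s T2 = 0.
  A finitely presented module F is (up to isomorphism) R^n / K with K a finitely
  generated submodule of R^n; an R-linear map R^n / K -> I is given by the images
  m 0, ..., m (n-1) in I of the basis vectors, subject to K being contained in the kernel.
  Then T1 = ker(lin_map)/K and T2 = I / image(lin_map).\<close>
definition u_S_fp_wrt :: "'a::comm_ring_1 \<Rightarrow> 'a set \<Rightarrow> bool" where
  "u_S_fp_wrt s I \<longleftrightarrow> (\<exists>n m K. fg_submod n K \<and> (\<forall>i<n. m i \<in> I) \<and>
      K \<subseteq> lin_kernel n m \<and>
      (\<forall>v\<in>lin_kernel n m. (\<lambda>i. s * v i) \<in> K) \<and>
      (\<forall>x\<in>I. s * x \<in> lin_map n m ` free_mod n))"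

definition u_S_coherent :: "'a::comm_ring_1 set \<Rightarrow> bool" where
  "u_S_coherent S \<longleftrightarrow> (\<exists>s\<in>S. S_finite_wrt s (UNIV::'a set) \<and>
      (\<forall>I. fg_ideal I \<longrightarrow> u_S_fp_wrt s I))"

end

theory Submission
  imports Defs HOL.Modules "HOL-Library.Function_Algebras"
begin

(* Coherence with s = 1 gives (1) => (2), and maximal ideals are prime. For (3) => (1), present
   a finitely generated ideal I as the image of phi : R^n -> I and let J be the ideal of all t
   for which t ker(phi) lies in a finitely generated submodule of ker(phi). Comparing a
   u-S-finite presentation of I with respect to s with phi (a Schanuel-type argument) shows
   s^2 \<in> J. Hence J lies in no maximal ideal, so 1 \<in> J and ker(phi) is finitely generated. *)

section \<open>Ideals\<close>

lemma is_ideal_zero: "is_ideal I \<Longrightarrow> 0 \<in> I"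
  and is_ideal_add: "is_ideal I \<Longrightarrow> x \<in> I \<Longrightarrow> y \<in> I \<Longrightarrow> x + y \<in> I"
  and is_ideal_mult: "is_ideal I \<Longrightarrow> x \<in> I \<Longrightarrow> r * x \<in> I"
  unfolding is_ideal_def by blast+

lemma is_ideal_eq_UNIV_if_one: "is_ideal I \<Longrightarrow> 1 \<in> I \<Longrightarrow> I = UNIV"
  using is_ideal_mult[of I 1] by auto

lemma one_notin_prime_ideal: "prime_ideal P \<Longrightarrow> 1 \<notin> P"
  unfolding prime_ideal_def using is_ideal_eq_UNIV_if_one by blast

lemma is_ideal_add_multiples:
  assumes "is_ideal I"
  shows "is_ideal {x + r * a | x r. x \<in> I}" (is "is_ideal ?J")
  unfolding is_ideal_def
proof (intro conjI ballI allI)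
  have "0 = 0 + 0 * a"
    by simp
  then show "0 \<in> ?J"
    using is_ideal_zero[OF assms] by blast
next
  fix u v assume "u \<in> ?J" "v \<in> ?J"
  then obtain x1 r1 x2 r2 where "u = x1 + r1 * a" "v = x2 + r2 * a" "x1 \<in> I" "x2 \<in> I"
    by blast
  moreover have "(x1 + r1 * a) + (x2 + r2 * a) = (x1 + x2) + (r1 + r2) * a"
    by (simp add: algebra_simps)
  ultimately show "u + v \<in> ?J"
    using is_ideal_add[OF assms] by blast
next
  fix t u assume "u \<in> ?J"
  then obtain x1 r1 where "u = x1 + r1 * a" "x1 \<in> I"
    by blast
  moreover have "t * (x1 + r1 * a) = t * x1 + (t * r1) * a"
    by (simp add: algebra_simps)
  ultimately show "t * u \<in> ?J"
    using is_ideal_mult[OF assms] by blast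
qed

lemma maximal_ideal_imp_prime_ideal:
  assumes "maximal_ideal M"
  shows "prime_ideal M"
proof -
  have M: "is_ideal M" "M \<noteq> UNIV"
    and maximal: "\<And>J. is_ideal J \<Longrightarrow> M \<subseteq> J \<Longrightarrow> J = M \<or> J = UNIV"
    using assms unfolding maximal_ideal_def by auto
  have "b \<in> M" if ab: "a * b \<in> M" and a: "a \<notin> M" for a b
  proof -
    let ?J = "{x + r * a | x r. x \<in> M}"
    have "x = x + 0 * a" for x
      by simp
    then have "M \<subseteq> ?J"
      by blast
    have "a = 0 + 1 * a"
      by simp
    then have "a \<in> ?J"
      using is_ideal_zero[OF M(1)] by blast
    then have "?J \<noteq> M"
      using a by blast
    then have "1 \<in> ?J"
      using maximal[OF is_ideal_add_multiples[OF M(1)] \<open>M \<subseteq> ?J\<close>] by simp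
    then obtain x r where x: "x \<in> M" and one: "1 = x + r * a"
      by blast
    have "b = (x + r * a) * b"
      by (simp flip: one)
    also have "\<dots> = b * x + r * (a * b)"
      by (simp add: algebra_simps)
    finally show "b \<in> M"
      using is_ideal_add[OF M(1) is_ideal_mult[OF M(1) x, of b] is_ideal_mult[OF M(1) ab, of r]]
      by simp
  qed
  then show ?thesis
    using M unfolding prime_ideal_def by blast
qed

lemma is_ideal_Union_chain:
  assumes "C \<noteq> {}" "\<And>X. X \<in> C \<Longrightarrow> is_ideal X" "\<And>X Y. X \<in> C \<Longrightarrow> Y \<in> C \<Longrightarrow> X \<subseteq> Y \<or> Y \<subseteq> X"
  shows "is_ideal (\<Union>C)"
  unfolding is_ideal_def
proof (intro conjI ballI allI)
  obtain X where "X \<in> C"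
    using assms(1) by blast
  then show "0 \<in> \<Union>C"
    using is_ideal_zero[OF assms(2)] by blast
next
  fix x y assume "x \<in> \<Union>C" "y \<in> \<Union>C"
  then obtain X Y where XY: "x \<in> X" "y \<in> Y" "X \<in> C" "Y \<in> C"
    by blast
  then have "x + y \<in> Y \<or> x + y \<in> X"
    using assms(3)[OF XY(3,4)] is_ideal_add[OF assms(2)] by blast
  then show "x + y \<in> \<Union>C"
    using XY(3,4) by blast
next
  fix r x assume "x \<in> \<Union>C"
  then show "r * x \<in> \<Union>C"
    using is_ideal_mult[OF assms(2)] by blast
qed

lemma exists_maximal_ideal_superset:
  assumes "is_ideal J" "1 \<notin> J"
  obtains M where "maximal_ideal M" "J \<subseteq> M"
proof -
  let ?A = "{K. is_ideal K \<and> J \<subseteq> K \<and> 1 \<notin> K}"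
  have "\<Union>C \<in> ?A" if C: "C \<noteq> {}" "subset.chain ?A C" for C
  proof -
    have "C \<subseteq> ?A" "\<forall>X\<in>C. \<forall>Y\<in>C. X \<subseteq> Y \<or> Y \<subseteq> X"
      using C(2) unfolding subset_chain_def by auto
    then have "is_ideal (\<Union>C)"
      using is_ideal_Union_chain[OF C(1)] by blast
    moreover have "J \<subseteq> \<Union>C" "1 \<notin> \<Union>C"
      using \<open>C \<subseteq> ?A\<close> C(1) by auto
    ultimately show ?thesis
      by blast
  qed
  then obtain M where M: "M \<in> ?A" and max: "\<forall>X\<in>?A. M \<subseteq> X \<longrightarrow> X = M"
    using subset_Zorn_nonempty[of ?A] assms by blast
  have "maximal_ideal M"
    unfolding maximal_ideal_def
  proof (intro conjI allI impI)
    show "is_ideal M" "M \<noteq> UNIV"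
      using M by auto
    fix K assume K: "is_ideal K \<and> M \<subseteq> K"
    show "K = M \<or> K = UNIV"
    proof (cases "1 \<in> K")
      case True
      then show ?thesis
        using is_ideal_eq_UNIV_if_one K by blast
    next
      case False
      then show ?thesis
        using K M max by blast
    qed
  qed
  then show thesis
    using M that by blast
qed

section \<open>Linear algebra over R\<close>

interpretation vec: module "\<lambda>r (v :: 'i \<Rightarrow> 'a::comm_ring_1) i. r * v i"
  by unfold_locales (simp_all add: fun_eq_iff algebra_simps)

interpretation scalars: module "(*) :: 'a::comm_ring_1 \<Rightarrow> 'a \<Rightarrow> 'a"
  by unfold_locales (simp_all add: algebra_simps)

(* These rules orient associativity against mult.assoc; together they make simp loop. *)
declare vec.scale_scale [simp del] scalars.scale_scale [simp del]

lemma sum_fun_apply: "(\<Sum>x\<in>A. f x) i = (\<Sum>x\<in>A. f x i)"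
  by (induction A rule: infinite_finite_induct) simp_all

lemma gen_submod_eq_span: "finite G \<Longrightarrow> gen_submod G = vec.span G"
  by (auto simp: gen_submod_def vec.span_finite sum_fun_apply fun_eq_iff)

lemma gen_ideal_eq_span: "finite G \<Longrightarrow> gen_ideal G = scalars.span G"
  by (auto simp: gen_ideal_def scalars.span_finite)

lemma subspace_free_mod: "vec.subspace (free_mod n)"
  by (simp add: vec.subspace_def free_mod_def)

lemma module_hom_lin_map: "module_hom (\<lambda>r v i. r * v i) (*) (lin_map n m)"
proof -
  have "lin_map n m (x + y) = lin_map n m x + lin_map n m y" for x y :: "nat \<Rightarrow> 'a"
    unfolding lin_map_def by (simp add: distrib_right sum.distrib)
  moreover have "lin_map n m (\<lambda>i. c * x i) = c * lin_map n m x" for c and x :: "nat \<Rightarrow> 'a"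
    unfolding lin_map_def sum_distrib_left by (rule sum.cong) (simp_all add: mult.assoc)
  ultimately show ?thesis
    by (simp add: module_hom_iff vec.module_axioms scalars.module_axioms)
qed

lemma subspace_lin_kernel: "vec.subspace (lin_kernel n m)"
proof -
  have "lin_kernel n m = free_mod n \<inter> {v. lin_map n m v = 0}"
    by (auto simp: lin_kernel_def)
  then show ?thesis
    using vec.subspace_inter subspace_free_mod module_hom.subspace_kernel[OF module_hom_lin_map]
    by metis
qed

definition lin_comb :: "'j set \<Rightarrow> ('j \<Rightarrow> 'i \<Rightarrow> 'a::comm_ring_1) \<Rightarrow> ('j \<Rightarrow> 'a) \<Rightarrow> 'i \<Rightarrow> 'a" where
  "lin_comb A f w = (\<Sum>x\<in>A. (\<lambda>i. w x * f x i))"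

lemma lin_comb_apply: "lin_comb A f w i = (\<Sum>x\<in>A. w x * f x i)"
  by (simp add: lin_comb_def sum_fun_apply)

lemma module_hom_lin_comb: "module_hom (\<lambda>r v i. r * v i) (\<lambda>r v i. r * v i) (lin_comb A f)"
  unfolding module_hom_iff
  by (simp add: vec.module_axioms fun_eq_iff lin_comb_apply distrib_right sum.distrib
      sum_distrib_left mult.assoc)

lemma lin_comb_in_span: "lin_comb A f w \<in> vec.span (f ` A)"
  unfolding lin_comb_def by (intro vec.span_sum vec.span_scale vec.span_base) simp

lemma lin_comb_in_subspace: "vec.subspace L \<Longrightarrow> f ` A \<subseteq> L \<Longrightarrow> lin_comb A f w \<in> L"
  by (rule subsetD[OF vec.span_minimal lin_comb_in_span])

lemma lin_map_lin_comb: "lin_map n m (lin_comb A f w) = (\<Sum>x\<in>A. w x * lin_map n m (f x))"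
  unfolding lin_comb_def
  by (simp add: module_hom.sum[OF module_hom_lin_map] module_hom.scale[OF module_hom_lin_map])

lemma lin_comb_lin_comb:
  "lin_comb B g (lin_comb A f w) = lin_comb A (\<lambda>x. lin_comb B g (f x)) w"
  unfolding lin_comb_def[of A]
  by (simp add: module_hom.sum[OF module_hom_lin_comb] module_hom.scale[OF module_hom_lin_comb])

lemma lin_comb_unit_vectors:
  assumes "v \<in> free_mod n"
  shows "lin_comb {..<n} (\<lambda>i j. if j = i then 1 else 0) v = v"
proof
  fix j
  show "lin_comb {..<n} (\<lambda>i j. if j = i then 1 else 0) v j = v j"
    using assms by (cases "j < n") (auto simp: lin_comb_apply free_mod_def if_distrib cong: if_cong)
qed

lemma fg_ideal_presentation:
  assumes "fg_ideal I"
  obtains n \<phi> where "\<forall>i<n. \<phi> i \<in> I" "lin_map n \<phi> ` free_mod n = I"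
proof -
  obtain G where G: "finite G" "I = scalars.span G"
    using assms by (auto simp: fg_ideal_def gen_ideal_eq_span)
  obtain \<phi> where \<phi>: "bij_betw \<phi> {..<card G} G"
    using ex_bij_betw_nat_finite[OF G(1)] by (auto simp: atLeast0LessThan)
  then have \<phi>_G: "\<phi> i \<in> G" if "i < card G" for i
    using that by (auto simp: bij_betw_def)
  have "lin_map (card G) \<phi> ` free_mod (card G) = I"
  proof
    have "lin_map (card G) \<phi> v \<in> scalars.span G" for v
      unfolding lin_map_def
      by (intro scalars.span_sum scalars.span_scale scalars.span_base \<phi>_G) simp
    then show "lin_map (card G) \<phi> ` free_mod (card G) \<subseteq> I"
      using G(2) by blast
    show "I \<subseteq> lin_map (card G) \<phi> ` free_mod (card G)"
    proof
      fix x assume "x \<in> I"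
      then obtain c where "x = (\<Sum>g\<in>G. c g * g)"
        using G by (auto simp: scalars.span_finite)
      also have "\<dots> = (\<Sum>i<card G. c (\<phi> i) * \<phi> i)"
        by (rule sum.reindex_bij_betw[OF \<phi>, symmetric])
      also have "\<dots> = lin_map (card G) \<phi> (\<lambda>i. if i < card G then c (\<phi> i) else 0)"
        by (simp add: lin_map_def)
      finally show "x \<in> lin_map (card G) \<phi> ` free_mod (card G)"
        by (auto simp: free_mod_def)
    qed
  qed
  then show thesis
    using that \<phi>_G G(2) scalars.span_base by blast
qed

lemma u_S_fp_wrtE:
  assumes "u_S_fp_wrt s I"
  obtains p m G where "\<forall>k<p. m k \<in> I" "finite G" "G \<subseteq> lin_kernel p m"
    "\<forall>w\<in>lin_kernel p m. (\<lambda>i. s * w i) \<in> vec.span G"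
    "\<forall>x\<in>I. s * x \<in> lin_map p m ` free_mod p"
proof -
  obtain p m K where K: "fg_submod p K" "K \<subseteq> lin_kernel p m"
    and m: "\<forall>k<p. m k \<in> I" and s_kernel: "\<forall>w\<in>lin_kernel p m. (\<lambda>i. s * w i) \<in> K"
    and s_image: "\<forall>x\<in>I. s * x \<in> lin_map p m ` free_mod p"
    using assms unfolding u_S_fp_wrt_def by blast
  obtain G where G: "finite G" "K = vec.span G"
    using K(1) gen_submod_eq_span unfolding fg_submod_def by blast
  have "G \<subseteq> lin_kernel p m"
    using vec.span_superset[of G] K(2) unfolding G(2) by (rule order_trans)
  then show thesis
    using that[OF m G(1) _ _ s_image] s_kernel G(2) by simp
qed

lemma S_finite_wrt_UNIV: "S_finite_wrt s (UNIV :: 'a::comm_ring_1 set)"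
proof -
  have "scalars.span {1 :: 'a} = UNIV"
    using scalars.span_scale[OF scalars.span_base[of 1 "{1}"]] by auto
  then show ?thesis
    unfolding S_finite_wrt_def by (intro exI[of _ "{1}"]) (simp add: gen_ideal_eq_span)
qed

lemma u_S_fp_wrt_one_if_fp_ideal:
  assumes "fp_ideal I"
  shows "u_S_fp_wrt 1 I"
proof -
  obtain n m where "\<forall>i<n. m i \<in> I" "lin_map n m ` free_mod n = I" "fg_submod n (lin_kernel n m)"
    using assms unfolding fp_ideal_def by blast
  then show ?thesis
    unfolding u_S_fp_wrt_def by (intro exI[of _ n] exI[of _ m] exI[of _ "lin_kernel n m"]) simp
qed

section \<open>Multipliers into finitely generated submodules\<close>

definition submod_finite_wrt :: "'a::comm_ring_1 \<Rightarrow> ('i \<Rightarrow> 'a) set \<Rightarrow> bool" where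
  "submod_finite_wrt t L \<longleftrightarrow> (\<exists>H. finite H \<and> H \<subseteq> L \<and> (\<forall>v\<in>L. (\<lambda>i. t * v i) \<in> vec.span H))"

lemma is_ideal_submod_finite_wrt:
  fixes L :: "('i \<Rightarrow> 'a::comm_ring_1) set"
  shows "is_ideal {t. submod_finite_wrt t L}"
proof -
  have "submod_finite_wrt 0 L"
    unfolding submod_finite_wrt_def by (intro exI[of _ "{}"]) (simp add: fun_eq_iff)
  moreover have "submod_finite_wrt (x + y) L"
    if fin_x: "submod_finite_wrt x L" and fin_y: "submod_finite_wrt y L" for x y
  proof -
    obtain H1 where H1: "finite H1" "H1 \<subseteq> L" and x: "\<forall>v\<in>L. (\<lambda>i. x * v i) \<in> vec.span H1"
      using fin_x unfolding submod_finite_wrt_def by blast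
    obtain H2 where H2: "finite H2" "H2 \<subseteq> L" and y: "\<forall>v\<in>L. (\<lambda>i. y * v i) \<in> vec.span H2"
      using fin_y unfolding submod_finite_wrt_def by blast
    have "(\<lambda>i. (x + y) * v i) \<in> vec.span (H1 \<union> H2)" if "v \<in> L" for v
    proof -
      have "(\<lambda>i. x * v i) \<in> vec.span (H1 \<union> H2)" "(\<lambda>i. y * v i) \<in> vec.span (H1 \<union> H2)"
        using x y \<open>v \<in> L\<close> vec.span_mono[of H1 "H1 \<union> H2"] vec.span_mono[of H2 "H1 \<union> H2"]
        by auto
      moreover have "(\<lambda>i. (x + y) * v i) = (\<lambda>i. x * v i) + (\<lambda>i. y * v i)"
        by (simp add: fun_eq_iff distrib_right)
      ultimately show ?thesis
        by (simp add: vec.span_add)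
    qed
    then show ?thesis
      using H1 H2 unfolding submod_finite_wrt_def by (intro exI[of _ "H1 \<union> H2"]) auto
  qed
  moreover have "submod_finite_wrt (r * x) L" if fin_x: "submod_finite_wrt x L" for r x
  proof -
    obtain H where H: "finite H" "H \<subseteq> L" and x: "\<forall>v\<in>L. (\<lambda>i. x * v i) \<in> vec.span H"
      using fin_x unfolding submod_finite_wrt_def by blast
    have "(\<lambda>i. r * x * v i) \<in> vec.span H" if "v \<in> L" for v
      using vec.span_scale[OF x[rule_format, OF that], of r] by (simp add: mult.assoc)
    then show ?thesis
      using H unfolding submod_finite_wrt_def by blast
  qed
  ultimately show ?thesis
    by (simp add: is_ideal_def)
qed

lemma fg_submod_if_submod_finite_wrt_one:
  assumes "vec.subspace L" "L \<subseteq> free_mod n" "submod_finite_wrt 1 L"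
  shows "fg_submod n L"
proof -
  obtain H where H: "finite H" "H \<subseteq> L" "L \<subseteq> vec.span H"
    using assms(3) by (auto simp: submod_finite_wrt_def)
  then have "L = gen_submod H"
    using vec.span_minimal[OF H(2) assms(1)] by (simp add: gen_submod_eq_span)
  then show ?thesis
    using H assms(2) by (auto simp: fg_submod_def)
qed

lemma scale_eq_correction_plus_composite:
  assumes "v \<in> free_mod n"
  shows "(\<lambda>j. s * v j) =
    lin_comb {..<n} (\<lambda>i. (\<lambda>j. if j = i then s else 0) - lin_comb B b (a i)) v
      + lin_comb B b (lin_comb {..<n} a v)"
proof
  fix j
  have "(\<Sum>i<n. v i * (if j = i then s else 0)) = s * (\<Sum>i<n. v i * (if j = i then 1 else 0))"
    unfolding sum_distrib_left by (rule sum.cong) auto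
  also have "\<dots> = s * v j"
    using lin_comb_unit_vectors[OF assms] by (simp add: lin_comb_apply fun_eq_iff)
  finally have unit: "(\<Sum>i<n. v i * (if j = i then s else 0)) = s * v j" .
  have "lin_comb {..<n} (\<lambda>i. (\<lambda>j. if j = i then s else 0) - lin_comb B b (a i)) v j
      = (\<Sum>i<n. v i * (if j = i then s else 0)) - (\<Sum>i<n. v i * lin_comb B b (a i) j)"
    unfolding lin_comb_apply[of "{..<n}"] minus_apply right_diff_distrib sum_subtractf ..
  moreover have "lin_comb B b (lin_comb {..<n} a v) j = (\<Sum>i<n. v i * lin_comb B b (a i) j)"
    unfolding lin_comb_lin_comb lin_comb_apply[of "{..<n}"] ..
  ultimately show "s * v j = (lin_comb {..<n} (\<lambda>i. (\<lambda>j. if j = i then s else 0) - lin_comb B b (a i)) v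
      + lin_comb B b (lin_comb {..<n} a v)) j"
    by (simp add: unit)
qed

context
  fixes \<phi> m :: "nat \<Rightarrow> 'a::comm_ring_1" and a b :: "nat \<Rightarrow> nat \<Rightarrow> 'a" and n p :: nat and s :: 'a
  assumes lift_a: "\<And>i. i < n \<Longrightarrow> a i \<in> free_mod p \<and> lin_map p m (a i) = s * \<phi> i"
    and lift_b: "\<And>k. k < p \<Longrightarrow> b k \<in> free_mod n \<and> lin_map n \<phi> (b k) = m k"
begin

lemma lift_b_free_mod: "lin_comb {..<p} b w \<in> free_mod n"
  using lift_b by (intro lin_comb_in_subspace subspace_free_mod) auto

lemma lin_map_lift_b: "lin_map n \<phi> (lin_comb {..<p} b w) = lin_map p m w"
  unfolding lin_map_lin_comb using lift_b by (simp add: lin_map_def)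

lemma lift_b_kernel: "w \<in> lin_kernel p m \<Longrightarrow> lin_comb {..<p} b w \<in> lin_kernel n \<phi>"
  using lift_b_free_mod lin_map_lift_b by (simp add: lin_kernel_def)

lemma lift_a_kernel:
  assumes "v \<in> lin_kernel n \<phi>"
  shows "lin_comb {..<n} a v \<in> lin_kernel p m"
proof -
  have "lin_map p m (lin_comb {..<n} a v) = (\<Sum>i<n. v i * (s * \<phi> i))"
    unfolding lin_map_lin_comb using lift_a by (intro sum.cong) simp_all
  also have "\<dots> = s * lin_map n \<phi> v"
    unfolding lin_map_def sum_distrib_left by (intro sum.cong) (simp_all add: mult.left_commute)
  finally have "lin_map p m (lin_comb {..<n} a v) = 0"
    using assms by (simp add: lin_kernel_def)
  moreover have "lin_comb {..<n} a v \<in> free_mod p"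
    using lift_a by (intro lin_comb_in_subspace subspace_free_mod) auto
  ultimately show ?thesis
    by (simp add: lin_kernel_def)
qed

lemma correction_kernel:
  assumes "i < n"
  shows "(\<lambda>j. if j = i then s else 0) - lin_comb {..<p} b (a i) \<in> lin_kernel n \<phi>"
proof -
  have "(\<lambda>j. if j = i then s else 0) \<in> free_mod n"
    using assms by (simp add: free_mod_def)
  then have free: "(\<lambda>j. if j = i then s else 0) - lin_comb {..<p} b (a i) \<in> free_mod n"
    using lift_b_free_mod by (intro vec.subspace_diff subspace_free_mod)
  have "lin_map n \<phi> ((\<lambda>j. if j = i then s else 0) - lin_comb {..<p} b (a i))
      = lin_map n \<phi> (\<lambda>j. if j = i then s else 0) - lin_map p m (a i)"
    unfolding module_hom.diff[OF module_hom_lin_map] lin_map_lift_b ..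
  also have "\<dots> = 0"
    using assms lift_a by (simp add: lin_map_def if_distrib if_distribR cong: if_cong)
  finally show ?thesis
    using free by (simp add: lin_kernel_def)
qed

lemma submod_finite_wrt_square_kernel:
  assumes G: "finite G" "G \<subseteq> lin_kernel p m"
    and s_kernel: "\<forall>w\<in>lin_kernel p m. (\<lambda>i. s * w i) \<in> vec.span G"
  shows "submod_finite_wrt (s * s) (lin_kernel n \<phi>)"
proof -
  (* gamma i is the i-th column of s - beta alpha, so s v = (sum of v i gamma i) + beta (alpha v)
     with every gamma i in ker phi; and alpha v lies in ker m, so s (alpha v) \<in> span G. *)
  define \<beta> where "\<beta> = lin_comb {..<p} b"
  define \<gamma> where "\<gamma> i = (\<lambda>j. if j = i then s else 0) - \<beta> (a i)" for i
  let ?H = "\<gamma> ` {..<n} \<union> \<beta> ` G"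
  have "(\<lambda>j. s * s * v j) \<in> vec.span ?H" if v: "v \<in> lin_kernel n \<phi>" for v
  proof -
    define w where "w = lin_comb {..<n} a v"
    have "(\<lambda>j. s * v j) = lin_comb {..<n} \<gamma> v + \<beta> w"
      using v unfolding \<gamma>_def \<beta>_def w_def
      by (simp add: lin_kernel_def scale_eq_correction_plus_composite)
    moreover have "\<beta> (\<lambda>k. s * w k) = (\<lambda>j. s * \<beta> w j)"
      unfolding \<beta>_def by (rule module_hom.scale[OF module_hom_lin_comb])
    ultimately have decomposition:
      "(\<lambda>j. s * s * v j) = (\<lambda>j. s * lin_comb {..<n} \<gamma> v j) + \<beta> (\<lambda>k. s * w k)"
      by (simp add: fun_eq_iff algebra_simps)
    have "\<beta> (\<lambda>k. s * w k) \<in> vec.span (\<beta> ` G)"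
      using s_kernel lift_a_kernel[OF v] module_hom.span_image[OF module_hom_lin_comb]
      unfolding w_def \<beta>_def by blast
    then have "\<beta> (\<lambda>k. s * w k) \<in> vec.span ?H"
      using vec.span_mono[of "\<beta> ` G" ?H] by blast
    moreover have "lin_comb {..<n} \<gamma> v \<in> vec.span ?H"
      using lin_comb_in_span vec.span_mono by blast
    ultimately have "(\<lambda>j. s * lin_comb {..<n} \<gamma> v j) + \<beta> (\<lambda>k. s * w k) \<in> vec.span ?H"
      by (intro vec.span_add vec.span_scale)
    then show ?thesis
      by (simp only: decomposition)
  qed
  moreover have "\<gamma> i \<in> lin_kernel n \<phi>" if "i < n" for i
    unfolding \<gamma>_def \<beta>_def using that by (rule correction_kernel)
  moreover have "\<beta> g \<in> lin_kernel n \<phi>" if "g \<in> G" for g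
    unfolding \<beta>_def using that G(2) by (intro lift_b_kernel) blast
  moreover have "finite ?H"
    using G(1) by simp
  ultimately show ?thesis
    unfolding submod_finite_wrt_def by (intro exI[of _ ?H]) blast
qed

end

lemma submod_finite_wrt_kernel:
  fixes \<phi> :: "nat \<Rightarrow> 'a::comm_ring_1"
  assumes I: "lin_map n \<phi> ` free_mod n = I" and \<phi>: "\<forall>i<n. \<phi> i \<in> I" and "u_S_fp_wrt s I"
  shows "submod_finite_wrt (s * s) (lin_kernel n \<phi>)"
proof -
  obtain p m G where m: "\<forall>k<p. m k \<in> I" and G: "finite G" "G \<subseteq> lin_kernel p m"
    and s_kernel: "\<forall>w\<in>lin_kernel p m. (\<lambda>i. s * w i) \<in> vec.span G"
    and s_image: "\<forall>x\<in>I. s * x \<in> lin_map p m ` free_mod p"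
    using u_S_fp_wrtE[OF assms(3)] by blast
  have "\<forall>i. \<exists>w. i < n \<longrightarrow> w \<in> free_mod p \<and> lin_map p m w = s * \<phi> i"
    using s_image \<phi> by (metis imageE)
  then obtain a where a: "\<And>i. i < n \<Longrightarrow> a i \<in> free_mod p \<and> lin_map p m (a i) = s * \<phi> i"
    by metis
  have "\<forall>k. \<exists>v. k < p \<longrightarrow> v \<in> free_mod n \<and> lin_map n \<phi> v = m k"
    using m I by (metis imageE)
  then obtain b where b: "\<And>k. k < p \<Longrightarrow> b k \<in> free_mod n \<and> lin_map n \<phi> (b k) = m k"
    by metis
  show ?thesis
    by (rule submod_finite_wrt_square_kernel[OF a b G s_kernel])
qed

section \<open>Coherence\<close>

lemma u_S_coherent_if_coherent_ring:
  assumes "coherent_ring (R :: 'a::comm_ring_1 itself)" "1 \<in> S"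
  shows "u_S_coherent (S :: 'a set)"
  using assms S_finite_wrt_UNIV u_S_fp_wrt_one_if_fp_ideal
  unfolding u_S_coherent_def coherent_ring_def by blast

lemma coherent_ring_if_u_S_coherent_at_maximal:
  assumes "\<forall>M::'a::comm_ring_1 set. maximal_ideal M \<longrightarrow> u_S_coherent (UNIV - M)"
  shows "coherent_ring (R :: 'a itself)"
  unfolding coherent_ring_def
proof (intro allI impI)
  fix I :: "'a set"
  assume "fg_ideal I"
  then obtain n \<phi> where \<phi>: "\<forall>i<n. \<phi> i \<in> I" "lin_map n \<phi> ` free_mod n = I"
    using fg_ideal_presentation by blast
  let ?J = "{t. submod_finite_wrt t (lin_kernel n \<phi>)}"
  have "1 \<in> ?J"
  proof (rule ccontr)
    assume "1 \<notin> ?J"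
    then obtain M where M: "maximal_ideal M" "?J \<subseteq> M"
      using exists_maximal_ideal_superset is_ideal_submod_finite_wrt by blast
    then obtain s where "s \<notin> M" "u_S_fp_wrt s I"
      using assms \<open>fg_ideal I\<close> unfolding u_S_coherent_def by blast
    then have "s * s \<in> M"
      using submod_finite_wrt_kernel[OF \<phi>(2,1)] M(2) by blast
    then show False
      using \<open>s \<notin> M\<close> maximal_ideal_imp_prime_ideal[OF M(1)] unfolding prime_ideal_def by blast
  qed
  then have "fg_submod n (lin_kernel n \<phi>)"
    by (intro fg_submod_if_submod_finite_wrt_one subspace_lin_kernel) (auto simp: lin_kernel_def)
  then show "fp_ideal I"
    using \<phi> unfolding fp_ideal_def by blast
qed

theorem proposition3p9:
  fixes R :: "'a::comm_ring_1 itself"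
  shows "(coherent_ring R \<longleftrightarrow> (\<forall>P::'a set. prime_ideal P \<longrightarrow> u_S_coherent (UNIV - P)))
    \<and> ((\<forall>P::'a set. prime_ideal P \<longrightarrow> u_S_coherent (UNIV - P))
        \<longleftrightarrow> (\<forall>M::'a set. maximal_ideal M \<longrightarrow> u_S_coherent (UNIV - M)))"
proof -
  have "coherent_ring R \<Longrightarrow> prime_ideal P \<Longrightarrow> u_S_coherent (UNIV - P)" for P :: "'a set"
    using u_S_coherent_if_coherent_ring one_notin_prime_ideal by blast
  then show ?thesis
    using coherent_ring_if_u_S_coherent_at_maximal[where R = R] maximal_ideal_imp_prime_ideal
    by blast
qed

end
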